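(* Let $\varphi\colon\mathcal{A}\to\mathcal{A}^*$ be a substitution of constant length $k$. Let $x\in\mathcal{A}^{\mathbf{Z}}$, let $(x^i)_{i\geq0}$ be a sequence of elements of $\mathcal{A}^{\mathbf{Z}}$ and $(c_i)_{i\geq0}$ a sequence of elements of $[0,k-1]$ such that $x^0=x$ and $x^i=T^{c_i}(\varphi(x^{i+1}))$ for all $i\geq0$. Then $$\mathrm{K}_k(x)=\Big\{\Psi_{\mathbf{i}}(x^m): m\geq0,\ \mathbf{i}\in[0,k-1]^m,\ \sum_{l=0}^{m-1}i_{m-l-1}k^l\geq\sum_{l=0}^{m-1}c_lk^l\Big\}\cup\Big\{\Psi_{\mathbf{i}}(T(x^m)): m\geq0,\ \mathbf{i}\in[0,k-1]^m,\ \sum_{l=0}^{m-1}i_{m-l-1}k^l<\sum_{l=0}^{m-1}c_lk^l\Big\}.$$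
   Context: $\varphi$ has constant length $k\geq2$ ($|\varphi(a)|=k$ for all $a$) and acts on $\mathcal{A}^{\mathbf{Z}}$ by concatenation with $\varphi(x_0)$ starting at position $0$; $T$ is the shift $(Tx)_n=x_{n+1}$. For $i\in[0,k-1]$, $\Psi_i\colon\mathcal{A}\to\mathcal{A}$, $a\mapsto\varphi(a)_i$ (the $i$-th letter, indexing from $0$), extended letterwise to $\mathcal{A}^{\mathbf{Z}}$. For $\mathbf{i}=i_0\cdots i_{m-1}\in[0,k-1]^m$, $\Psi_{\mathbf{i}}=\Psi_{i_{m-1}}\circ\cdots\circ\Psi_{i_0}$, and $\Psi_{\mathbf{i}}$ is the identity when $m=0$. The $k$-kernel of a two-sided sequence $x=(x_n)_{n\in\mathbf{Z}}$ is $\mathrm{K}_k(x)=\{(x_{k^mn+i})_{n\in\mathbf{Z}}: m\geq0,\ 0\leq i\leq k^m-1\}$. *)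

theory Defs
  imports Main
begin

definition shift :: "(int \<Rightarrow> 'a) \<Rightarrow> (int \<Rightarrow> 'a)" where
  "shift x = (\<lambda>n. x (n + 1))"

text \<open>Action of a constant-length-k substitution on two-sided sequences:
phi(x) is the concatenation of the phi(x_n), with phi(x_0) starting at position 0.\<close>
definition subst_seq :: "('a \<Rightarrow> 'a list) \<Rightarrow> nat \<Rightarrow> (int \<Rightarrow> 'a) \<Rightarrow> (int \<Rightarrow> 'a)" where
  "subst_seq phi k x = (\<lambda>n. phi (x (n div int k)) ! nat (n mod int k))"

definition Psi :: "('a \<Rightarrow> 'a list) \<Rightarrow> nat \<Rightarrow> 'a \<Rightarrow> 'a" where
  "Psi phi i a = phi a ! i"

text \<open>Psi_{i_0 ... i_{m-1}} = Psi_{i_{m-1}} o ... o Psi_{i_0}, applied letterwise.\<close>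
definition Psi_word :: "('a \<Rightarrow> 'a list) \<Rightarrow> nat list \<Rightarrow> (int \<Rightarrow> 'a) \<Rightarrow> (int \<Rightarrow> 'a)" where
  "Psi_word phi is x = (\<lambda>n. fold (Psi phi) is (x n))"

definition kernel :: "nat \<Rightarrow> (int \<Rightarrow> 'a) \<Rightarrow> (int \<Rightarrow> 'a) set" where
  "kernel k x = {(\<lambda>n. x (int (k ^ m) * n + int i)) | m i. i < k ^ m}"

end

theory Submission
  imports Defs
begin

text \<open>Unfolding the recursion \<open>x\<^sup>i = T\<^bsup>c\<^sub>i\<^esup>(\<phi>(x\<^sup>i\<^sup>+\<^sup>1))\<close> \<open>m\<close> times
  shows that the letter at position \<open>q\<close> of \<open>\<Psi>\<^sub>w(x\<^sup>m)\<close>, for a digit word \<open>w\<close> of length \<open>m\<close>,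
  is the letter of \<open>x\<close> at position \<open>k\<^sup>m q + v(w) - C\<^sub>m\<close>, where \<open>v(w)\<close> is the base-\<open>k\<close>
  value of \<open>w\<close> and \<open>C\<^sub>m = \<Sum>\<^sub>l\<^sub><\<^sub>m c\<^sub>l k\<^sup>l < k\<^sup>m\<close>. As \<open>w\<close> ranges over all words of
  length \<open>m\<close>, \<open>v(w)\<close> ranges over \<open>[0, k\<^sup>m)\<close>, so \<open>v(w) - C\<^sub>m\<close> hits every residue
  modulo \<open>k\<^sup>m\<close> exactly once. It lies in \<open>[0, k\<^sup>m)\<close> when \<open>v(w) \<ge> C\<^sub>m\<close>; otherwise
  applying \<open>\<Psi>\<^sub>w\<close> to \<open>T(x\<^sup>m)\<close> instead adds the missing \<open>k\<^sup>m\<close>.\<close>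

definition seq_value :: "nat \<Rightarrow> (nat \<Rightarrow> nat) \<Rightarrow> nat \<Rightarrow> nat" where
  "seq_value k d m = (\<Sum>l<m. d l * k ^ l)"

definition base_value :: "nat \<Rightarrow> nat list \<Rightarrow> nat" where
  "base_value k ws = seq_value k (\<lambda>l. ws ! (length ws - l - 1)) (length ws)"

lemma seq_value_cong:
  "(\<And>l. l < m \<Longrightarrow> d l = e l) \<Longrightarrow> seq_value k d m = seq_value k e m"
  by (simp add: seq_value_def)

lemma seq_value_Suc: "seq_value k d (Suc m) = d 0 + k * seq_value k (\<lambda>l. d (Suc l)) m"
  unfolding seq_value_def
  by (subst sum.lessThan_Suc_shift) (simp add: sum_distrib_left algebra_simps)

lemma seq_value_less:
  assumes "\<And>l. l < m \<Longrightarrow> d l < k"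
  shows "seq_value k d m < k ^ m"
  using assms
proof (induction m arbitrary: d)
  case 0
  then show ?case by (simp add: seq_value_def)
next
  case (Suc m)
  have "seq_value k (\<lambda>l. d (Suc l)) m + 1 \<le> k ^ m"
    using Suc.IH[of "\<lambda>l. d (Suc l)"] Suc.prems by simp
  then have "k * (seq_value k (\<lambda>l. d (Suc l)) m + 1) \<le> k * k ^ m"
    by (rule mult_le_mono2)
  moreover have "d 0 < k" using Suc.prems by simp
  ultimately show ?case by (simp add: seq_value_Suc algebra_simps)
qed

lemma base_value_snoc: "base_value k (ws @ [r]) = k * base_value k ws + r"
proof -
  have "seq_value k (\<lambda>l. (ws @ [r]) ! (length ws - Suc l)) (length ws)
      = base_value k ws"
    unfolding base_value_def by (rule seq_value_cong) (auto simp: nth_append)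
  then show ?thesis by (simp add: base_value_def seq_value_Suc)
qed

lemma base_value_less:
  assumes "set ws \<subseteq> {0..<k}"
  shows "base_value k ws < k ^ length ws"
  unfolding base_value_def
proof (rule seq_value_less)
  fix l assume "l < length ws"
  then have "ws ! (length ws - l - 1) \<in> set ws" by simp
  with assms show "ws ! (length ws - l - 1) < k" by auto
qed

lemma ex_base_value_eq:
  "v < k ^ m \<Longrightarrow> \<exists>ws. length ws = m \<and> set ws \<subseteq> {0..<k} \<and> base_value k ws = v"
proof (induction m arbitrary: v)
  case 0
  then show ?case by (simp add: base_value_def seq_value_def)
next
  case (Suc m)
  then have "k > 0" by (cases k) auto
  with Suc.prems have "v div k < k ^ m"
    by (simp add: div_less_iff_less_mult mult.commute)
  then obtain ws where "length ws = m" "set ws \<subseteq> {0..<k}" "base_value k ws = v div k"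
    using Suc.IH by blast
  with \<open>k > 0\<close> show ?case
    by (intro exI[of _ "ws @ [v mod k]"]) (simp add: base_value_snoc)
qed

lemma funpow_shift: "(shift ^^ n) y = (\<lambda>t. y (t + int n))"
  by (induction n arbitrary: y) (auto simp: shift_def algebra_simps)

lemma Psi_word_snoc: "Psi_word phi (ws @ [r]) y = (\<lambda>n. Psi phi r (Psi_word phi ws y n))"
  by (simp add: Psi_word_def)

lemma Psi_word_shift: "Psi_word phi ws (shift y) n = Psi_word phi ws y (n + 1)"
  by (simp add: Psi_word_def shift_def)

lemma Psi_eq_shift_subst_seq:
  assumes "r < k"
  shows "Psi phi r (z p) = (shift ^^ c) (subst_seq phi k z) (int k * p + int r - int c)"
proof -
  have "(int k * p + int r) div int k = p" "(int k * p + int r) mod int k = int r"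
    using assms by simp_all
  then show ?thesis by (simp add: funpow_shift subst_seq_def Psi_def)
qed

lemma kernel_memI: "i < k ^ m \<Longrightarrow> (\<lambda>n. x (int (k ^ m) * n + int i)) \<in> kernel k x"
  unfolding kernel_def by blast

context
  fixes phi :: "'a \<Rightarrow> 'a list" and k :: nat and xs :: "nat \<Rightarrow> int \<Rightarrow> 'a" and c :: "nat \<Rightarrow> nat"
  assumes c_less: "\<And>i. c i < k"
    and xs_desubst: "\<And>i. xs i = (shift ^^ c i) (subst_seq phi k (xs (i + 1)))"
begin

lemma Psi_word_desubst:
  "set ws \<subseteq> {0..<k} \<Longrightarrow> Psi_word phi ws (xs (j + length ws)) q
     = xs j (int (k ^ length ws) * q + int (base_value k ws)
              - int (seq_value k (\<lambda>l. c (j + l)) (length ws)))"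
proof (induction ws arbitrary: j q rule: rev_induct)
  case Nil
  then show ?case by (simp add: Psi_word_def base_value_def seq_value_def)
next
  case (snoc r ws)
  define p where "p = int (k ^ length ws) * q + int (base_value k ws)
                        - int (seq_value k (\<lambda>l. c (Suc j + l)) (length ws))"
  have "Psi_word phi (ws @ [r]) (xs (j + length (ws @ [r]))) q
      = Psi phi r (Psi_word phi ws (xs (Suc j + length ws)) q)"
    by (simp add: Psi_word_snoc)
  also have "\<dots> = Psi phi r (xs (Suc j) p)"
    using snoc.IH[of "Suc j" q] snoc.prems p_def by simp
  also have "\<dots> = xs j (int k * p + int r - int (c j))"
    using Psi_eq_shift_subst_seq[of r k] snoc.prems xs_desubst[of j] by simp
  also have "int k * p + int r - int (c j)
      = int (k ^ length (ws @ [r])) * q + int (base_value k (ws @ [r]))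
        - int (seq_value k (\<lambda>l. c (j + l)) (length (ws @ [r])))"
    by (simp add: p_def base_value_snoc seq_value_Suc algebra_simps)
  finally show ?case .
qed

lemma Psi_word_eq_kernel_seq:
  "set ws \<subseteq> {0..<k} \<Longrightarrow> Psi_word phi ws (xs (length ws))
     = (\<lambda>n. xs 0 (int (k ^ length ws) * n + int (base_value k ws)
                   - int (seq_value k c (length ws))))"
  using Psi_word_desubst[of ws 0] by auto

lemma Psi_word_xs_in_kernel:
  assumes "set ws \<subseteq> {0..<k}" and "seq_value k c (length ws) \<le> base_value k ws"
  shows "Psi_word phi ws (xs (length ws)) \<in> kernel k (xs 0)"
proof -
  have "base_value k ws - seq_value k c (length ws) < k ^ length ws"
    using base_value_less[OF assms(1)] by linarith
  from kernel_memI[OF this] show ?thesis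
    using assms by (simp add: Psi_word_eq_kernel_seq of_nat_diff algebra_simps)
qed

lemma Psi_word_shift_xs_in_kernel:
  assumes "set ws \<subseteq> {0..<k}" and "base_value k ws < seq_value k c (length ws)"
  shows "Psi_word phi ws (shift (xs (length ws))) \<in> kernel k (xs 0)"
proof -
  have C_less: "seq_value k c (length ws) < k ^ length ws"
    using c_less by (intro seq_value_less)
  then have "k ^ length ws + base_value k ws - seq_value k c (length ws) < k ^ length ws"
    using assms(2) by linarith
  moreover have "Psi_word phi ws (shift (xs (length ws)))
      = (\<lambda>n. xs 0 (int (k ^ length ws) * n
                    + int (k ^ length ws + base_value k ws - seq_value k c (length ws))))"
    using assms C_less
    by (simp add: fun_eq_iff Psi_word_shift Psi_word_eq_kernel_seq of_nat_diff algebra_simps)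
  ultimately show ?thesis by (metis kernel_memI)
qed

lemma kernel_seq_cases:
  assumes "i < k ^ m"
  obtains ws where "length ws = m" "set ws \<subseteq> {0..<k}" "seq_value k c m \<le> base_value k ws"
    and "(\<lambda>n. xs 0 (int (k ^ m) * n + int i)) = Psi_word phi ws (xs m)"
  | ws where "length ws = m" "set ws \<subseteq> {0..<k}" "base_value k ws < seq_value k c m"
    and "(\<lambda>n. xs 0 (int (k ^ m) * n + int i)) = Psi_word phi ws (shift (xs m))"
proof -
  have C_less: "seq_value k c m < k ^ m"
    using c_less by (intro seq_value_less)
  have "k > 0"
    using c_less[of 0] by simp
  obtain ws where ws: "length ws = m" "set ws \<subseteq> {0..<k}"
    and v: "base_value k ws = (i + seq_value k c m) mod k ^ m"
    using ex_base_value_eq[of "(i + seq_value k c m) mod k ^ m" k m] \<open>k > 0\<close> by auto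
  show thesis
  proof (cases "i + seq_value k c m < k ^ m")
    case True
    with v have "base_value k ws = i + seq_value k c m" by simp
    with ws show thesis
      by (intro that(1)[of ws]) (auto simp: Psi_word_eq_kernel_seq)
  next
    case False
    with v assms C_less have "base_value k ws = i + seq_value k c m - k ^ m"
      by (simp add: le_mod_geq)
    with ws False assms show thesis
      by (intro that(2)[of ws])
        (auto simp: fun_eq_iff Psi_word_shift Psi_word_eq_kernel_seq of_nat_diff algebra_simps)
  qed
qed

end

theorem lemma2p7:
  fixes phi :: "'a \<Rightarrow> 'a list" and k :: nat
    and x :: "int \<Rightarrow> 'a" and xs :: "nat \<Rightarrow> int \<Rightarrow> 'a" and c :: "nat \<Rightarrow> nat"
  assumes "k \<ge> 2"
    and "\<And>a. length (phi a) = k"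
    and "\<And>i. c i < k"
    and "xs 0 = x"
    and "\<And>i. xs i = ((shift ^^ c i) (subst_seq phi k (xs (i + 1))))"
  shows "kernel k x =
     {Psi_word phi is (xs m) | m is. length is = m \<and> set is \<subseteq> {0..<k} \<and>
        (\<Sum>l<m. is ! (m - l - 1) * k ^ l) \<ge> (\<Sum>l<m. c l * k ^ l)}
   \<union> {Psi_word phi is (shift (xs m)) | m is. length is = m \<and> set is \<subseteq> {0..<k} \<and>
        (\<Sum>l<m. is ! (m - l - 1) * k ^ l) < (\<Sum>l<m. c l * k ^ l)}"
    (is "_ = ?R")
proof (intro equalityI subsetI)
  fix y assume "y \<in> kernel k x"
  then obtain m i where "i < k ^ m" and "y = (\<lambda>n. x (int (k ^ m) * n + int i))"
    by (auto simp: kernel_def)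
  then show "y \<in> ?R"
    by (cases rule: kernel_seq_cases[where phi = phi and c = c and xs = xs, OF assms(3,5)])
      (auto simp: base_value_def seq_value_def assms(4))
next
  fix y assume "y \<in> ?R"
  then show "y \<in> kernel k x"
    using Psi_word_xs_in_kernel[where phi = phi and c = c and xs = xs, OF assms(3,5)]
      Psi_word_shift_xs_in_kernel[where phi = phi and c = c and xs = xs, OF assms(3,5)]
    by (auto simp: base_value_def seq_value_def assms(4))
qed

end
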